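(* Let $\Sigma$ be a signature containing two non-rigid constant symbols $a$ and $b$, and let $M=(W,D,I)$ be a full id-model for $\Sigma$. Then $$M\models\eta \iff D \text{ is finite},$$ where $\eta := \big(\mathrm{dep}(a,b)\wedge \mathrm{dep}(b,a)\wedge \exists^{\mathsf i}x\,(x\neq b)\big)\to \exists^{\mathsf i}x\,(x\neq a)$.
   Context: Inquisitive first-order logic InqBQ. A signature consists of predicate symbols and function symbols, each with an arity; function symbols are either rigid or non-rigid, and function symbols of arity $0$ are constant symbols. Terms are built from variables and function symbols as usual. Formulas are given by $\phi ::= P(t_1,\dots,t_n)\mid (t=t')\mid \bot\mid (\phi\wedge\phi)\mid(\phi\mathbin{\vee\!\!\!\vee}\phi)\mid(\phi\to\phi)\mid\forall x\phi\mid\exists^{\mathsf i}x\phi$, where $\mathbin{\vee\!\!\!\vee}$ is inquisitive disjunction and $\exists^{\mathsf i}$ is the inquisitive existential quantifier. Abbreviations: $\neg\phi:=\phi\to\bot$, $(t\neq t'):=\neg(t=t')$, $?\phi:=\phi\mathbin{\vee\!\!\!\vee}\neg\phi$. Formulas without $\mathbin{\vee\!\!\!\vee}$ and $\exists^{\mathsf i}$ are called classical. An id-model is a triple $M=(W,D,I)$ with $W$ a non-empty set of worlds, $D$ a non-empty domain, and $I$ assigning to each world $w$ an interpretation $I_w$ giving each $n$-ary predicate $P$ a relation $P_w\subseteq D^n$ and each $n$-ary function symbol $f$ a function $f_w:D^n\to D$ (rigid symbols get the same interpretation at every world); equality is interpreted as identity on $D$ at every world. Term values $[t]^g_w$ are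 defined as usual. Support of a formula at a state $s\subseteq W$ under an assignment $g$: $M,s\models_g P(t_1,\dots,t_n)$ iff $([t_1]^g_w,\dots,[t_n]^g_w)\in P_w$ for all $w\in s$; $M,s\models_g t=t'$ iff $[t]^g_w=[t']^g_w$ for all $w\in s$; $M,s\models_g\bot$ iff $s=\emptyset$; $\wedge$ is conjunction of support; $M,s\models_g\phi\mathbin{\vee\!\!\!\vee}\psi$ iff $M,s\models_g\phi$ or $M,s\models_g\psi$; $M,s\models_g\phi\to\psi$ iff for every $t\subseteq s$, $M,t\models_g\phi$ implies $M,t\models_g\psi$; $M,s\models_g\forall x\phi$ iff $M,s\models_{g[x\mapsto d]}\phi$ for all $d\in D$; $M,s\models_g\exists^{\mathsf i}x\phi$ iff $M,s\models_{g[x\mapsto d]}\phi$ for some $d\in D$. For a sentence $\phi$, $M\models\phi$ means $M,W\models\phi$. For a term $t$, $\lambda t:=\exists^{\mathsf i}x\,(x=t)$ with $x$ a variable not occurring in $t$, and $\mathrm{dep}(t,t'):=\lambda t\to\lambda t'$. For an id-model over a signature containing non-rigid constants $a,b$ and a state $s\subseteq W$, let $R_s=\{(a_w,b_w)\mid w\in s\}\subseteq D^2$. The model is full if $R_W=D^2$. *)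

theory Defs
  imports Main
begin

datatype 'f trm = Var nat | Fn 'f "'f trm list"

datatype ('p, 'f) form =
    Pred 'p "'f trm list"
  | Eq "'f trm" "'f trm"
  | Bot
  | Conj "('p, 'f) form" "('p, 'f) form"
  | IDisj "('p, 'f) form" "('p, 'f) form"
  | Imp "('p, 'f) form" "('p, 'f) form"
  | All nat "('p, 'f) form"
  | IEx nat "('p, 'f) form"

record ('p, 'f) signature =
  parity :: "'p \<Rightarrow> nat"
  farity :: "'f \<Rightarrow> nat"
  rigid :: "'f \<Rightarrow> bool"

record ('w, 'd, 'p, 'f) model =
  worlds :: "'w set"
  domain :: "'d set"
  fint :: "'w \<Rightarrow> 'f \<Rightarrow> 'd list \<Rightarrow> 'd"
  pint :: "'w \<Rightarrow> 'p \<Rightarrow> 'd list set"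

definition is_idmodel :: "('p, 'f) signature \<Rightarrow> ('w, 'd, 'p, 'f) model \<Rightarrow> bool" where
  "is_idmodel S M \<longleftrightarrow>
     worlds M \<noteq> {} \<and> domain M \<noteq> {} \<and>
     (\<forall>w\<in>worlds M. \<forall>f ds. length ds = farity S f \<and> set ds \<subseteq> domain M
          \<longrightarrow> fint M w f ds \<in> domain M) \<and>
     (\<forall>w\<in>worlds M. \<forall>p. pint M w p \<subseteq> {ds. length ds = parity S p \<and> set ds \<subseteq> domain M}) \<and>
     (\<forall>f. rigid S f \<longrightarrow> (\<forall>w\<in>worlds M. \<forall>w'\<in>worlds M. \<forall>ds.
          length ds = farity S f \<and> set ds \<subseteq> domain M \<longrightarrow> fint M w f ds = fint M w' f ds))"

fun tval :: "('w, 'd, 'p, 'f) model \<Rightarrow> 'w \<Rightarrow> (nat \<Rightarrow> 'd) \<Rightarrow> 'f trm \<Rightarrow> 'd" where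
  "tval M w g (Var x) = g x"
| "tval M w g (Fn f ts) = fint M w f (map (tval M w g) ts)"

primrec support :: "('w, 'd, 'p, 'f) model \<Rightarrow> ('p, 'f) form \<Rightarrow> 'w set \<Rightarrow> (nat \<Rightarrow> 'd) \<Rightarrow> bool" where
  "support M (Pred p ts) s g = (\<forall>w\<in>s. map (tval M w g) ts \<in> pint M w p)"
| "support M (Eq t t') s g = (\<forall>w\<in>s. tval M w g t = tval M w g t')"
| "support M Bot s g = (s = {})"
| "support M (Conj \<phi> \<psi>) s g = (support M \<phi> s g \<and> support M \<psi> s g)"
| "support M (IDisj \<phi> \<psi>) s g = (support M \<phi> s g \<or> support M \<psi> s g)"
| "support M (Imp \<phi> \<psi>) s g = (\<forall>t\<subseteq>s. support M \<phi> t g \<longrightarrow> support M \<psi> t g)"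
| "support M (All x \<phi>) s g = (\<forall>d\<in>domain M. support M \<phi> s (g(x := d)))"
| "support M (IEx x \<phi>) s g = (\<exists>d\<in>domain M. support M \<phi> s (g(x := d)))"

definition models :: "('w, 'd, 'p, 'f) model \<Rightarrow> ('p, 'f) form \<Rightarrow> bool" where
  "models M \<phi> \<longleftrightarrow> (\<forall>g. range g \<subseteq> domain M \<longrightarrow> support M \<phi> (worlds M) g)"

definition Neg :: "('p, 'f) form \<Rightarrow> ('p, 'f) form" where
  "Neg \<phi> = Imp \<phi> Bot"

definition Neq :: "'f trm \<Rightarrow> 'f trm \<Rightarrow> ('p, 'f) form" where
  "Neq t t' = Neg (Eq t t')"

fun tvars :: "'f trm \<Rightarrow> nat list" where
  "tvars (Var x) = [x]"
| "tvars (Fn f ts) = concat (map tvars ts)"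

definition fresh :: "'f trm \<Rightarrow> nat" where
  "fresh t = Suc (foldr max (tvars t) 0)"

definition lam :: "'f trm \<Rightarrow> ('p, 'f) form" where
  "lam t = IEx (fresh t) (Eq (Var (fresh t)) t)"

definition dep :: "'f trm \<Rightarrow> 'f trm \<Rightarrow> ('p, 'f) form" where
  "dep t t' = Imp (lam t) (lam t')"

text \<open>The formula eta, with x the variable 0 and a, b constant symbols.\<close>
definition eta :: "'f \<Rightarrow> 'f \<Rightarrow> ('p, 'f) form" where
  "eta a b = Imp (Conj (Conj (dep (Fn a []) (Fn b [])) (dep (Fn b []) (Fn a [])))
                        (IEx 0 (Neq (Var 0) (Fn b []))))
                 (IEx 0 (Neq (Var 0) (Fn a [])))"

definition full :: "('w, 'd, 'p, 'f) model \<Rightarrow> 'f \<Rightarrow> 'f \<Rightarrow> bool" where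
  "full M a b \<longleftrightarrow>
     {(fint M w a [], fint M w b []) | w. w \<in> worlds M} = domain M \<times> domain M"

end

theory Submission
  imports Defs "HOL-Library.Equipollence"
begin

text \<open>Supporting the premise of eta in a state t says that a and b determine each other in t,
  so the pairs (a_w, b_w), w in t, form the graph of a bijection between the values a takes in t
  and those b takes; eta then says that if b misses some value in t, so does a. If D is finite,
  a bijection from all of D onto a subset of D is onto, which gives eta. If D is infinite, some
  injection f maps D onto a proper subset; by fullness, the worlds with b = f a form a state in
  which a takes every value but b misses those outside the range of f, refuting eta.\<close>

definition determines :: "('w \<Rightarrow> 'a) \<Rightarrow> ('w \<Rightarrow> 'b) \<Rightarrow> 'w set \<Rightarrow> bool" where
  "determines A B t \<longleftrightarrow> (\<forall>w\<in>t. \<forall>w'\<in>t. A w = A w' \<longrightarrow> B w = B w')"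

lemma card_graph_eq_card_image_if_determines:
  assumes "determines A B t"
  shows "card ((\<lambda>w. (A w, B w)) ` t) = card (A ` t)"
proof -
  have "inj_on fst ((\<lambda>w. (A w, B w)) ` t)"
  proof (rule inj_onI)
    fix x y assume "x \<in> (\<lambda>w. (A w, B w)) ` t" "y \<in> (\<lambda>w. (A w, B w)) ` t" "fst x = fst y"
    then obtain w w' where "w \<in> t" "w' \<in> t" "x = (A w, B w)" "y = (A w', B w')"
      and "A w = A w'"
      by auto
    moreover from this have "B w = B w'"
      using assms unfolding determines_def by blast
    ultimately show "x = y"
      by simp
  qed
  then have "card (fst ` (\<lambda>w. (A w, B w)) ` t) = card ((\<lambda>w. (A w, B w)) ` t)"
    by (rule card_image)
  then show ?thesis
    by (simp add: image_image)
qed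

lemma card_image_eq_if_determines:
  assumes "determines A B t" and "determines B A t"
  shows "card (A ` t) = card (B ` t)"
proof -
  have "card (A ` t) = card ((\<lambda>w. (A w, B w)) ` t)"
    using card_graph_eq_card_image_if_determines[OF assms(1)] by simp
  also have "\<dots> = card (prod.swap ` (\<lambda>w. (A w, B w)) ` t)"
    by (simp add: card_image)
  also have "\<dots> = card ((\<lambda>w. (B w, A w)) ` t)"
    by (simp add: image_image)
  also have "\<dots> = card (B ` t)"
    using card_graph_eq_card_image_if_determines[OF assms(2)] .
  finally show ?thesis .
qed

lemma image_eq_if_determines_finite:
  assumes "finite D" and "A ` t = D" and "B ` t \<subseteq> D"
    and "determines A B t" and "determines B A t"
  shows "B ` t = D"
proof (rule card_subset_eq[OF assms(1,3)])
  show "card (B ` t) = card D"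
    using card_image_eq_if_determines[OF assms(4,5)] assms(2) by simp
qed

lemma determining_state_if_infinite:
  assumes "infinite D" and full: "(\<lambda>w. (A w, B w)) ` W = D \<times> D"
  obtains t where "t \<subseteq> W" "determines A B t" "determines B A t" "A ` t = D" "\<not> D \<subseteq> B ` t"
proof -
  obtain D' f where "D' \<subset> D" "inj_on f D" "f ` D \<subseteq> D'"
    using \<open>infinite D\<close> unfolding infinite_iff_psubset_le lepoll_def by blast
  then obtain e where e: "e \<in> D" "e \<notin> f ` D"
    by blast
  define t where "t = {w \<in> W. B w = f (A w)}"
  have A_in_D: "A w \<in> D" if "w \<in> W" for w
    using full that by blast
  have "A ` t = D"
  proof
    show "A ` t \<subseteq> D"
      unfolding t_def using A_in_D by blast
    show "D \<subseteq> A ` t"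
    proof
      fix d assume "d \<in> D"
      then have "(d, f d) \<in> (\<lambda>w. (A w, B w)) ` W"
        using full \<open>f ` D \<subseteq> D'\<close> \<open>D' \<subset> D\<close> by blast
      then show "d \<in> A ` t"
        unfolding t_def by force
    qed
  qed
  moreover have "determines A B t"
    unfolding determines_def t_def by force
  moreover have "determines B A t"
    unfolding determines_def
  proof (intro ballI impI)
    fix w w' assume "w \<in> t" "w' \<in> t" "B w = B w'"
    then have "f (A w) = f (A w')" and "A w \<in> D" and "A w' \<in> D"
      unfolding t_def using A_in_D by auto
    then show "A w = A w'"
      using \<open>inj_on f D\<close> by (simp add: inj_on_eq_iff)
  qed
  moreover have "\<not> D \<subseteq> B ` t"
    unfolding t_def using e A_in_D by blast
  moreover have "t \<subseteq> W"
    unfolding t_def by blast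
  ultimately show ?thesis
    using that by blast
qed

lemma determines_cover_transfer_iff_finite:
  assumes full: "(\<lambda>w. (A w, B w)) ` W = D \<times> D"
  shows "(\<forall>t\<subseteq>W. determines A B t \<and> determines B A t \<and> \<not> D \<subseteq> B ` t \<longrightarrow> \<not> D \<subseteq> A ` t)
    \<longleftrightarrow> finite D"
proof
  assume "finite D"
  show "\<forall>t\<subseteq>W. determines A B t \<and> determines B A t \<and> \<not> D \<subseteq> B ` t \<longrightarrow> \<not> D \<subseteq> A ` t"
  proof (intro allI impI notI)
    fix t assume "t \<subseteq> W" and "determines A B t \<and> determines B A t \<and> \<not> D \<subseteq> B ` t"
      and "D \<subseteq> A ` t"
    moreover have "A ` t \<subseteq> D" "B ` t \<subseteq> D"
      using full \<open>t \<subseteq> W\<close> by auto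
    ultimately show False
      using image_eq_if_determines_finite[OF \<open>finite D\<close>, of A t B] by blast
  qed
next
  assume transfer: "\<forall>t\<subseteq>W. determines A B t \<and> determines B A t \<and> \<not> D \<subseteq> B ` t
    \<longrightarrow> \<not> D \<subseteq> A ` t"
  show "finite D"
  proof (rule ccontr)
    assume "infinite D"
    then obtain t where "t \<subseteq> W" "determines A B t" "determines B A t" "A ` t = D" "\<not> D \<subseteq> B ` t"
      using determining_state_if_infinite[OF _ full] by blast
    then show False
      using transfer by blast
  qed
qed

definition const_val :: "('w, 'd, 'p, 'f) model \<Rightarrow> 'f \<Rightarrow> 'w \<Rightarrow> 'd" where
  "const_val M c w = fint M w c []"

lemma const_val_in_domain:
  assumes "is_idmodel S M" and "farity S c = 0" and "w \<in> worlds M"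
  shows "const_val M c w \<in> domain M"
  using assms unfolding is_idmodel_def const_val_def by auto

lemma support_lam_const:
  "support M (lam (Fn c [])) t g \<longleftrightarrow> (\<exists>d\<in>domain M. \<forall>w\<in>t. const_val M c w = d)"
  by (auto simp: lam_def fresh_def const_val_def)

lemma support_IEx_neq_const:
  "support M (IEx x (Neq (Var x) (Fn c []))) s g \<longleftrightarrow> \<not> domain M \<subseteq> const_val M c ` s"
proof -
  have "(\<forall>t\<subseteq>s. (\<forall>w\<in>t. d = const_val M c w) \<longrightarrow> t = {}) \<longleftrightarrow> d \<notin> const_val M c ` s" for d
    by (auto dest: spec[of _ "{_}"])
  then show ?thesis
    by (auto simp: Neq_def Neg_def const_val_def)
qed

lemma support_dep_const:
  assumes "domain M \<noteq> {}"
    and "const_val M a ` s \<subseteq> domain M" and "const_val M b ` s \<subseteq> domain M"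
  shows "support M (dep (Fn a []) (Fn b [])) s g
    \<longleftrightarrow> determines (const_val M a) (const_val M b) s"
proof
  assume dep: "support M (dep (Fn a []) (Fn b [])) s g"
  show "determines (const_val M a) (const_val M b) s"
    unfolding determines_def
  proof (intro ballI impI)
    fix w w' assume w: "w \<in> s" "w' \<in> s" "const_val M a w = const_val M a w'"
    then have "support M (lam (Fn a [])) {w, w'} g"
      using assms(2) by (auto simp: support_lam_const)
    then have "support M (lam (Fn b [])) {w, w'} g"
      using dep w by (simp add: dep_def)
    then show "const_val M b w = const_val M b w'"
      by (auto simp: support_lam_const)
  qed
next
  assume det: "determines (const_val M a) (const_val M b) s"
  have "\<exists>d\<in>domain M. \<forall>w\<in>t. const_val M b w = d"
    if sub: "t \<subseteq> s" and const_a: "\<exists>d. \<forall>w\<in>t. const_val M a w = d" for t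
  proof (cases "t = {}")
    case False
    then obtain w0 where "w0 \<in> t"
      by auto
    have "const_val M b w = const_val M b w0" if "w \<in> t" for w
    proof -
      have "const_val M a w = const_val M a w0"
        using const_a \<open>w0 \<in> t\<close> that by metis
      moreover have "w \<in> s" and "w0 \<in> s"
        using sub \<open>w0 \<in> t\<close> that by blast+
      ultimately show ?thesis
        using det unfolding determines_def by blast
    qed
    moreover have "const_val M b w0 \<in> domain M"
      using assms(3) sub \<open>w0 \<in> t\<close> by blast
    ultimately show ?thesis
      by blast
  qed (use assms(1) in auto)
  then show "support M (dep (Fn a []) (Fn b [])) s g"
    by (auto simp: dep_def support_lam_const)
qed

lemma support_eta:
  assumes "is_idmodel S M" and "farity S a = 0" and "farity S b = 0" and "s \<subseteq> worlds M"
  defines "A \<equiv> const_val M a" and "B \<equiv> const_val M b"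
  shows "support M (eta a b) s g \<longleftrightarrow>
    (\<forall>t\<subseteq>s. determines A B t \<and> determines B A t \<and> \<not> domain M \<subseteq> B ` t
       \<longrightarrow> \<not> domain M \<subseteq> A ` t)"
proof -
  have dom: "domain M \<noteq> {}"
    using assms(1) by (simp add: is_idmodel_def)
  have img: "const_val M c ` t \<subseteq> domain M" if "t \<subseteq> s" and "farity S c = 0" for t c
    using const_val_in_domain[OF assms(1) \<open>farity S c = 0\<close>] that(1) assms(4) by blast
  have "support M (dep (Fn a []) (Fn b [])) t g \<longleftrightarrow> determines A B t"
    and "support M (dep (Fn b []) (Fn a [])) t g \<longleftrightarrow> determines B A t" if "t \<subseteq> s" for t
    unfolding A_def B_def
    using support_dep_const[OF dom img[OF that assms(2)] img[OF that assms(3)]]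
      support_dep_const[OF dom img[OF that assms(3)] img[OF that assms(2)]]
    by simp_all
  then show ?thesis
    unfolding eta_def support.simps(4,6) support_IEx_neq_const A_def B_def
    by (simp add: conj_assoc)
qed

lemma models_eta_iff:
  assumes "is_idmodel S M" and "farity S a = 0" and "farity S b = 0"
  defines "A \<equiv> const_val M a" and "B \<equiv> const_val M b"
  shows "models M (eta a b) \<longleftrightarrow>
    (\<forall>t\<subseteq>worlds M. determines A B t \<and> determines B A t \<and> \<not> domain M \<subseteq> B ` t
       \<longrightarrow> \<not> domain M \<subseteq> A ` t)"
proof -
  obtain d where "d \<in> domain M"
    using assms(1) by (auto simp: is_idmodel_def)
  then have "range (\<lambda>_. d) \<subseteq> domain M"
    by auto
  then show ?thesis
    unfolding models_def support_eta[OF assms(1-3) order_refl] A_def B_def by auto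
qed

theorem mainTheorem1:
  fixes S :: "('p, 'f) signature" and M :: "('w, 'd, 'p, 'f) model" and a b :: 'f
  assumes "farity S a = 0" and "farity S b = 0"
    and "\<not> rigid S a" and "\<not> rigid S b" and "a \<noteq> b"
    and "is_idmodel S M"
    and "full M a b"
  shows "models M (eta a b :: ('p, 'f) form) \<longleftrightarrow> finite (domain M)"
proof -
  have "(\<lambda>w. (const_val M a w, const_val M b w)) ` worlds M = domain M \<times> domain M"
    using \<open>full M a b\<close> unfolding full_def const_val_def by blast
  then show ?thesis
    unfolding models_eta_iff[OF \<open>is_idmodel S M\<close> assms(1,2)]
    by (rule determines_cover_transfer_iff_finite)
qed

end
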